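(* Let $\mathbf{w}$ be an infinite overlap-free word over the alphabet $\{0,1\}$. Then there is a position $i$ such that no square (nonempty word of the form $xx$) occurs in $\mathbf{w}$ beginning at position $i$.
   Context: A finite word $w$ is an $\alpha$-power ($\alpha$ rational) if $w = x^n x'$ with $x'$ a prefix of $x$, $x$ nonempty, and $\alpha = n + |x'|/|x|$. A square is a $2$-power, i.e. a word $xx$ with $x$ nonempty. An overlap is a word that is a $\beta$-power for some $\beta > 2$. A (finite or infinite) word is overlap-free if none of its factors (contiguous subwords) is an overlap. *)

theory Defs
  imports Complex_Main "HOL-Library.Sublist"
begin

(* Infinite words over an alphabet 'a are functions nat \<Rightarrow> 'a; positions start at 0.
   The binary alphabet {0,1} is represented by bool. Finite words are lists. *)

definition factor :: "(nat \<Rightarrow> 'a) \<Rightarrow> nat \<Rightarrow> nat \<Rightarrow> 'a list" where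
  "factor w i n = map w [i..<i+n]"

definition is_power :: "'a list \<Rightarrow> rat \<Rightarrow> bool" where
  "is_power u \<alpha> \<longleftrightarrow> (\<exists>x x' n. x \<noteq> [] \<and> prefix x' x \<and>
       u = concat (replicate n x) @ x' \<and>
       \<alpha> = of_nat n + of_nat (length x') / of_nat (length x))"

definition overlap :: "'a list \<Rightarrow> bool" where
  "overlap u \<longleftrightarrow> (\<exists>\<beta>. \<beta> > 2 \<and> is_power u \<beta>)"

definition overlap_free_inf :: "(nat \<Rightarrow> 'a) \<Rightarrow> bool" where
  "overlap_free_inf w \<longleftrightarrow> (\<forall>i n. \<not> overlap (factor w i n))"

definition square_at :: "(nat \<Rightarrow> 'a) \<Rightarrow> nat \<Rightarrow> bool" where
  "square_at w i \<longleftrightarrow> (\<exists>x. x \<noteq> [] \<and> factor w i (2 * length x) = x @ x)"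

end

(* A doubled letter cc can recur in a binary overlap-free word only at even distance: an odd gap
   forces a cube, an overlap of period 3, or an alternating factor ababa. Hence after its first
   doubled letter the word is a product of blocks 01 and 10, i.e. the Thue-Morse image mu(a) of a
   word a, which is again overlap-free since mu doubles periods. Such an a contains cc c' c
   (c' the complement of c), and mu(cc c' c) = c c' c c' c' c c c'. The position of its second
   letter starts no square: periods 1 and 3 are ruled out by the letters there, a square of even
   period extends one letter to the left to an overlap, and one of odd period >= 5 would repeat a
   doubled letter at odd distance. *)

theory Submission
  imports Defs
begin

lemma factor_nth: "k < n \<Longrightarrow> factor w j n ! k = w (j + k)"
  by (simp add: factor_def del: upt_Suc)

lemma length_factor [simp]: "length (factor w j n) = n"
  by (simp add: factor_def)

lemma factor_add: "factor w j (m + n) = factor w j m @ factor w (j + m) n"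
  unfolding factor_def using upt_add_eq_append[of j "j + m" n] by (simp add: add.assoc)

lemma factor_shift_eq:
  assumes "\<And>k. k < n \<Longrightarrow> w (j + k + q) = w (j + k)"
  shows "factor w (j + q) n = factor w j n"
proof (rule nth_equalityI)
  fix k
  assume "k < length (factor w (j + q) n)"
  then show "factor w (j + q) n ! k = factor w j n ! k"
    using assms[of k] by (simp add: factor_nth add.commute add.left_commute)
qed simp

text \<open>An overlap of the shortest kind: the factor \<open>x x c\<close> at position \<open>j\<close>, where
  \<open>|x| = q\<close> and \<open>c\<close> is the first letter of \<open>x\<close>.\<close>

definition overlap_at :: "(nat \<Rightarrow> 'a) \<Rightarrow> nat \<Rightarrow> nat \<Rightarrow> bool" where
  "overlap_at w j q \<longleftrightarrow> 0 < q \<and> (\<forall>k\<le>q. w (j + k + q) = w (j + k))"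

definition overlap_free_seq :: "(nat \<Rightarrow> 'a) \<Rightarrow> bool" where
  "overlap_free_seq w \<longleftrightarrow> (\<forall>j q. \<not> overlap_at w j q)"

lemma overlap_at_imp_overlap:
  assumes "overlap_at w j q"
  shows "overlap (factor w j (2 * q + 1))"
proof -
  let ?x = "factor w j q"
  from assms have q: "0 < q" and per: "\<And>k. k \<le> q \<Longrightarrow> w (j + k + q) = w (j + k)"
    by (auto simp: overlap_at_def)
  have "factor w (j + q) q = ?x"
    by (rule factor_shift_eq) (simp add: per)
  moreover have "factor w (j + (q + q)) 1 = [w j]"
    using per[of 0] per[of q] by (simp add: factor_def add.assoc)
  moreover have "factor w j (2 * q + 1) = ?x @ factor w (j + q) q @ factor w (j + (q + q)) 1"
    using factor_add[of w j "q + q" 1] factor_add[of w j q q] by (simp add: mult_2)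
  ultimately have "factor w j (2 * q + 1) = concat (replicate 2 ?x) @ [w j]"
    by (simp add: numeral_2_eq_2)
  moreover have "prefix [w j] ?x" and "?x \<noteq> []"
    using q by (simp_all add: factor_def upt_conv_Cons)
  ultimately have "is_power (factor w j (2 * q + 1)) (2 + 1 / of_nat q)"
    unfolding is_power_def by (intro exI[of _ ?x] exI[of _ "[w j]"] exI[of _ 2]) simp
  moreover have "(2 + 1 / of_nat q :: rat) > 2"
    using q by simp
  ultimately show ?thesis
    unfolding overlap_def by blast
qed

lemma overlap_free_inf_imp_overlap_free_seq:
  "overlap_free_inf w \<Longrightarrow> overlap_free_seq w"
  unfolding overlap_free_inf_def overlap_free_seq_def
  using overlap_at_imp_overlap by blast

lemma overlap_free_seq_shift:
  "overlap_free_seq w \<Longrightarrow> overlap_free_seq (\<lambda>k. w (p + k))"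
  unfolding overlap_free_seq_def overlap_at_def by (metis add.assoc)

lemma overlap_free_seq_no_cube:
  assumes "overlap_free_seq w" and "w (j + 1) = w j"
  shows "w (j + 2) \<noteq> w (j + 1)"
proof
  assume "w (j + 2) = w (j + 1)"
  with assms(2) have "overlap_at w j 1"
    by (auto simp: overlap_at_def le_Suc_eq numeral_2_eq_2)
  with assms(1) show False
    by (simp add: overlap_free_seq_def)
qed

lemma binary_overlap_free_seq_doubled_letter:
  fixes w :: "nat \<Rightarrow> bool"
  assumes "overlap_free_seq w"
  obtains k where "k < 4" and "w (j + k + 1) = w (j + k)"
proof (rule ccontr)
  assume "\<not> thesis"
  with that have alt: "\<And>k. k < 4 \<Longrightarrow> w (j + k + 1) \<noteq> w (j + k)"
    by blast
  have "w (j + k + 2) = w (j + k)" if "k \<le> 2" for k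
    using alt[of k] alt[of "k + 1"] that by (simp add: ac_simps)
  then have "overlap_at w j 2"
    by (simp add: overlap_at_def)
  with assms show False
    by (simp add: overlap_free_seq_def)
qed

lemma overlap_free_seq_desubstitute:
  fixes b :: "nat \<Rightarrow> bool"
  assumes ofs: "overlap_free_seq b" and blocks: "\<And>t. b (2 * t + 1) \<noteq> b (2 * t)"
  shows "overlap_free_seq (\<lambda>t. b (2 * t))"
  unfolding overlap_free_seq_def
proof (intro allI notI)
  fix j q
  assume "overlap_at (\<lambda>t. b (2 * t)) j q"
  then have q: "0 < q" and per: "\<And>r. r \<le> q \<Longrightarrow> b (2 * (j + r + q)) = b (2 * (j + r))"
    by (auto simp: overlap_at_def)
  have "b (2 * j + k + 2 * q) = b (2 * j + k)" if "k \<le> 2 * q" for k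
  proof (cases "even k")
    case True
    then obtain r where "k = 2 * r" ..
    then show ?thesis
      using per[of r] that by (simp add: algebra_simps)
  next
    case False
    then obtain r where "k = 2 * r + 1"
      using oddE by blast
    then show ?thesis
      using per[of r] that blocks[of "j + r"] blocks[of "j + r + q"] by (simp add: algebra_simps)
  qed
  with q have "overlap_at b (2 * j) (2 * q)"
    by (simp add: overlap_at_def)
  with ofs show False
    by (simp add: overlap_free_seq_def)
qed

lemma binary_overlap_free_seq_doubled_letters_even_distance:
  fixes w :: "nat \<Rightarrow> bool"
  assumes ofs: "overlap_free_seq w"
  shows "1 \<le> m \<Longrightarrow> w (m + 1) = w m \<Longrightarrow> w (m + d + 1) = w (m + d) \<Longrightarrow> even d"
proof (induction d arbitrary: m rule: less_induct)
  case (less d)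
  show ?case
  proof (cases "\<exists>k. 0 < k \<and> k < d \<and> w (m + k + 1) = w (m + k)")
    case True
    then obtain k where k: "0 < k" "k < d" "w (m + k + 1) = w (m + k)"
      by blast
    have "even k"
      using less.IH[of k m] k less.prems by simp
    moreover have "even (d - k)"
      using less.IH[of "d - k" "m + k"] k less.prems by simp
    ultimately show ?thesis
      using k by presburger
  next
    case False
    then have alt: "\<And>k. 0 < k \<Longrightarrow> k < d \<Longrightarrow> w (m + k + 1) \<noteq> w (m + k)"
      by blast
    have "d \<noteq> 1"
      using overlap_free_seq_no_cube[OF ofs less.prems(2)] less.prems(3)
      by (auto simp: numeral_2_eq_2)
    moreover have "d \<noteq> 3"
      \<comment> \<open>the word would read \<open>c' cc c' cc c'\<close> from \<open>m - 1\<close> on; here \<open>1 \<le> m\<close> is needed\<close>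
    proof
      assume d: "d = 3"
      obtain j where m: "m = j + 1"
        using less.prems(1) by (metis add.commute le_add_diff_inverse)
      have "w (j + 1) \<noteq> w j"
        using overlap_free_seq_no_cube[OF ofs, of j] less.prems(2) m by auto
      moreover have "w (j + 6) \<noteq> w (j + 5)"
        using overlap_free_seq_no_cube[OF ofs, of "j + 4"] less.prems(3) d m by (simp add: ac_simps)
      moreover have "w (j + 3) \<noteq> w (j + 2)" and "w (j + 4) \<noteq> w (j + 3)"
        using alt[of 1] alt[of 2] d m by (simp_all add: numeral_eq_Suc)
      ultimately have "overlap_at w j 3"
        using less.prems(2,3) d m
        by (auto simp: overlap_at_def numeral_eq_Suc le_Suc_eq ac_simps)
      with ofs show False
        by (simp add: overlap_free_seq_def)
    qed
    moreover have "d < 5"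
    proof (rule ccontr)
      assume "\<not> d < 5"
      moreover obtain k where "k < 4" "w (m + 1 + k + 1) = w (m + 1 + k)"
        using binary_overlap_free_seq_doubled_letter[OF ofs] .
      ultimately show False
        using alt[of "k + 1"] by (simp add: ac_simps)
    qed
    ultimately show ?thesis
      by presburger
  qed
qed

lemma binary_overlap_free_seq_pattern_0010:
  fixes a :: "nat \<Rightarrow> bool"
  assumes ofs: "overlap_free_seq a"
  obtains m where "a (m + 1) = a m" and "a (m + 3) = a m"
proof (rule ccontr)
  assume "\<not> thesis"
  with that have none: "\<And>n. a (n + 1) = a n \<Longrightarrow> a (n + 3) \<noteq> a n"
    by blast
  \<comment> \<open>then \<open>cc\<close> is always followed by \<open>c'c'\<close>, giving the overlap \<open>cc c'c' cc c'c' c\<close>\<close>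
  have step: "a (n + 3) = a (n + 2) \<and> a (n + 2) \<noteq> a n" if "a (n + 1) = a n" for n
    using none[OF that] overlap_free_seq_no_cube[OF ofs that] that by auto
  obtain m where m: "a (m + 1) = a m"
    using binary_overlap_free_seq_doubled_letter[OF ofs, of 0] by auto
  have "overlap_at a m 4"
    using m step[of m] step[of "m + 2"] step[of "m + 4"] step[of "m + 6"]
    by (auto simp: overlap_at_def numeral_eq_Suc le_Suc_eq ac_simps)
  with ofs show False
    by (simp add: overlap_free_seq_def)
qed

lemma binary_overlap_free_seq_eventually_blocks:
  fixes w :: "nat \<Rightarrow> bool"
  assumes ofs: "overlap_free_seq w"
  obtains p where "\<And>t. w (p + 2 * t + 1) \<noteq> w (p + 2 * t)"
proof -
  obtain k where k: "w (1 + k + 1) = w (1 + k)"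
    using binary_overlap_free_seq_doubled_letter[OF ofs] by blast
  have "w (1 + k + 1 + 2 * t + 1) \<noteq> w (1 + k + 1 + 2 * t)" for t
  proof
    assume "w (1 + k + 1 + 2 * t + 1) = w (1 + k + 1 + 2 * t)"
    then have "even (2 * t + 1)"
      using binary_overlap_free_seq_doubled_letters_even_distance[OF ofs _ k, of "2 * t + 1"]
      by (simp add: ac_simps)
    then show False
      by simp
  qed
  with that show thesis
    by blast
qed

lemma square_at_imp_period:
  assumes "square_at w i"
  obtains q where "0 < q" and "\<And>k. k < q \<Longrightarrow> w (i + k + q) = w (i + k)"
proof -
  obtain x where "x \<noteq> []" and x: "factor w i (2 * length x) = x @ x"
    using assms unfolding square_at_def by blast
  moreover have "w (i + k + length x) = w (i + k)" if "k < length x" for k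
  proof -
    have "w (i + k) = x ! k"
      using factor_nth[of k "2 * length x" w i] that by (simp add: x nth_append)
    moreover have "w (i + (k + length x)) = x ! k"
      using factor_nth[of "k + length x" "2 * length x" w i] that by (simp add: x nth_append)
    ultimately show ?thesis
      by (simp add: add.assoc)
  qed
  ultimately show thesis
    using that by blast
qed

lemma binary_overlap_free_seq_not_square_at:
  fixes w :: "nat \<Rightarrow> bool"
  assumes ofs: "overlap_free_seq w"
    and blocks: "\<And>t. w (p + 2 * t + 1) \<noteq> w (p + 2 * t)"
    and i: "i = p + 2 * s + 1"
    and "w (i + 1) \<noteq> w i" and "w (i + 5) \<noteq> w (i + 2)"
  shows "\<not> square_at w i"
proof
  assume "square_at w i"
  then obtain q where q: "0 < q" and per: "\<And>k. k < q \<Longrightarrow> w (i + k + q) = w (i + k)"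
    using square_at_imp_period by blast
  have "q = 1 \<or> q = 3 \<or> even q \<or> odd q \<and> 5 \<le> q"
    using q by presburger
  then consider "q = 1" | "q = 3" | "even q" | "odd q" "5 \<le> q"
    by blast
  then show False
  proof cases
    case 1
    then show False
      using per[of 0] assms(4) by simp
  next
    case 2
    then show False
      using per[of 2] assms(5) by (simp add: add.commute)
  next
    case 3
    \<comment> \<open>the square extends one letter to the left, because \<open>i - 1\<close> and \<open>i - 1 + q\<close> both start blocks\<close>
    then obtain r where r: "q = 2 * r" ..
    have "w (p + 2 * s + k + q) = w (p + 2 * s + k)" if "k \<le> q" for k
    proof (cases k)
      case 0
      then show ?thesis
        using per[of 0] q blocks[of s] blocks[of "s + r"] i r by (auto simp: ac_simps)
    next
      case (Suc k')
      then show ?thesis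
        using per[of k'] that i by (simp add: ac_simps)
    qed
    with q have "overlap_at w (p + 2 * s) q"
      by (simp add: overlap_at_def)
    with ofs show False
      by (simp add: overlap_free_seq_def)
  next
    case 4
    \<comment> \<open>a doubled letter inside the first half recurs at the odd distance \<open>q\<close>\<close>
    obtain k where k: "k < 4" "w (i + k + 1) = w (i + k)"
      using binary_overlap_free_seq_doubled_letter[OF ofs] .
    have "w (i + k + q + 1) = w (i + k + q)"
      using per[of k] per[of "k + 1"] k 4 by (simp add: ac_simps)
    then have "even q"
      using binary_overlap_free_seq_doubled_letters_even_distance[OF ofs _ k(2)] i by simp
    with 4 show False
      by simp
  qed
qed

theorem theorem1:
  fixes w :: "nat \<Rightarrow> bool"
  assumes "overlap_free_inf w"
  shows "\<exists>i. \<not> square_at w i"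
proof -
  have ofs: "overlap_free_seq w"
    using assms by (rule overlap_free_inf_imp_overlap_free_seq)
  then obtain p where blocks: "\<And>t. w (p + 2 * t + 1) \<noteq> w (p + 2 * t)"
    using binary_overlap_free_seq_eventually_blocks by blast
  let ?a = "\<lambda>t. w (p + 2 * t)"
  have "overlap_free_seq ?a"
    using overlap_free_seq_desubstitute[OF overlap_free_seq_shift[OF ofs, of p]] blocks
    by (simp add: add.assoc)
  then obtain s where s: "?a (s + 1) = ?a s" "?a (s + 3) = ?a s"
    using binary_overlap_free_seq_pattern_0010 by blast
  \<comment> \<open>\<open>i\<close> is the second letter of the image \<open>c c' c c' c' c c c'\<close> of \<open>cc c' c\<close>\<close>
  define i where "i = p + 2 * s + 1"
  have "w (i + 1) \<noteq> w i" and "w (i + 5) \<noteq> w (i + 2)"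
    using s blocks[of s] blocks[of "s + 1"] unfolding i_def by (simp_all add: algebra_simps)
  with ofs blocks i_def have "\<not> square_at w i"
    by (rule binary_overlap_free_seq_not_square_at)
  then show ?thesis
    by blast
qed

end
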